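(* Let $\mathcal{W}=(Q,\Sigma,\delta,q_\iota,\mathrm{Acc})$ be a binary-branching probabilistic parity word automaton and write $\delta(q,a)=\{q_1,q_2\}$ for the two distinct states with $\delta(q,a,q_i)=\tfrac12$. Let $\mathcal{A}=(Q,\Sigma,\Delta,q_\iota,\mathrm{Acc})$ be the (non-probabilistic) parity tree automaton with $\Delta=\{(q,a,q_1,q_2),(q,a,q_2,q_1): q\in Q,a\in\Sigma,\delta(q,a)=\{q_1,q_2\}\}$. Then $\mathcal{L}^{=1}(\mathcal{W})=\varnothing$ iff $\mathcal{L}^{\forall}_{\mathrm{qual}}(\mathcal{A})=\varnothing$.
   Context: Probabilistic word automaton: $(Q,\Sigma,\delta,q_\iota,\mathrm{Acc})$, $Q$ finite, $\Sigma$ finite, $\delta:Q\times\Sigma\times Q\to[0,1]$ with $\sum_p\delta(q,a,p)=1$; runs on $w\in\Sigma^\omega$ are $r\in Q^\omega$ with $r_0=q_\iota$, $\delta(r_i,w_i,r_{i+1})>0$; $\mu_w$ is the induced measure on runs (cone of prefix $r_0\dots r_n$ has measure $\prod_{i<n}\delta(r_i,w_i,r_{i+1})$); $\mathcal{L}^{=1}(\mathcal{W})=\{w:\mu_w(\{r\in\mathrm{Acc}\})=1\}$. Binary branching: all transition probabilities lie in $\{0,\tfrac12\}$. Parity condition given by $\alpha:Q\to\{0,\dots,k\}$: $r\in Q^\omega$ is in $\mathrm{Acc}$ iff the minimum of $\alpha(q)$ over states occurring infinitely often in $r$ is even. A $\Sigma$-tree is a map $t:\{0,1\}^*\to\Sigma$;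 for a branch $\pi\in\{0,1\}^\omega$, $t(\pi)=t(\epsilon)t(\pi_0)t(\pi_0\pi_1)\cdots$. The coin-flipping measure $\mu$ on $\{0,1\}^\omega$ gives the cone $u\{0,1\}^\omega$ measure $2^{-|u|}$. A tree automaton is $(Q,\Sigma,\Delta,q_\iota,\mathrm{Acc})$ with $\Delta\subseteq Q\times\Sigma\times Q\times Q$; a run on $t$ is a $Q$-tree $\rho$ with $\rho(\epsilon)=q_\iota$ and $(\rho(u),t(u),\rho(u0),\rho(u1))\in\Delta$ for all $u\in\{0,1\}^*$; it is qualitatively accepting if $\mu(\{\pi:\rho(\pi)\in\mathrm{Acc}\})=1$. The qualitative universal language is $\mathcal{L}^{\forall}_{\mathrm{qual}}(\mathcal{A})=\{t:\text{every run of }\mathcal{A}\text{ on }t\text{ is qualitatively accepting}\}$. *)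

theory Defs
  imports "HOL-Probability.Probability"
begin

definition prob_word_aut :: "('q::finite \<Rightarrow> 'a \<Rightarrow> 'q \<Rightarrow> real) \<Rightarrow> bool" where
  "prob_word_aut \<delta> \<longleftrightarrow>
     (\<forall>q a p. 0 \<le> \<delta> q a p \<and> \<delta> q a p \<le> 1) \<and> (\<forall>q a. (\<Sum>p\<in>UNIV. \<delta> q a p) = 1)"

definition binary_branching :: "('q \<Rightarrow> 'a \<Rightarrow> 'q \<Rightarrow> real) \<Rightarrow> bool" where
  "binary_branching \<delta> \<longleftrightarrow> (\<forall>q a p. \<delta> q a p \<in> {0, 1/2})"

definition parity_acc :: "('q \<Rightarrow> nat) \<Rightarrow> (nat \<Rightarrow> 'q) \<Rightarrow> bool" where
  "parity_acc \<alpha> r \<longleftrightarrow> even (Min {\<alpha> q | q. \<exists>\<^sub>\<infinity> n. r n = q})"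

definition run_space :: "(nat \<Rightarrow> 'q) measure" where
  "run_space = (\<Pi>\<^sub>M i\<in>(UNIV::nat set). count_space (UNIV::'q set))"

text \<open>M is the measure mu_w induced on runs by the word w: a probability measure
  on Q^omega whose cone of a prefix r_0 ... r_n has measure
  prod_{i<n} delta(r_i, w_i, r_{i+1}) if r_0 is the initial state, and 0 otherwise
  (runs start in the initial state).\<close>
definition induced_run_measure ::
  "('q \<Rightarrow> 'a \<Rightarrow> 'q \<Rightarrow> real) \<Rightarrow> 'q \<Rightarrow> (nat \<Rightarrow> 'a) \<Rightarrow> (nat \<Rightarrow> 'q) measure \<Rightarrow> bool" where
  "induced_run_measure \<delta> q0 w M \<longleftrightarrow>
     prob_space M \<and> sets M = sets run_space \<and>
     (\<forall>n (x::nat \<Rightarrow> 'q). measure M {r \<in> space M. \<forall>i\<le>n. r i = x i} =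
        (if x 0 = q0 then (\<Prod>i<n. \<delta> (x i) (w i) (x (Suc i))) else 0))"

text \<open>Almost-sure language L^{=1}(W).  The induced measure exists and is unique,
  so quantifying over all such measures is the same as referring to mu_w.\<close>
definition lang_as :: "('q::finite \<Rightarrow> 'a \<Rightarrow> 'q \<Rightarrow> real) \<Rightarrow> 'q \<Rightarrow> ('q \<Rightarrow> nat) \<Rightarrow> (nat \<Rightarrow> 'a) set" where
  "lang_as \<delta> q0 \<alpha> = {w. \<forall>M. induced_run_measure \<delta> q0 w M \<longrightarrow>
                          measure M {r \<in> space M. parity_acc \<alpha> r} = 1}"

text \<open>Trees: bool list => 'a (False = direction 0, True = direction 1).\<close>
definition tree_run :: "('q \<times> 'a \<times> 'q \<times> 'q) set \<Rightarrow> 'q \<Rightarrow> (bool list \<Rightarrow> 'a) \<Rightarrow> (bool list \<Rightarrow> 'q) \<Rightarrow> bool" where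
  "tree_run \<Delta> q0 t \<rho> \<longleftrightarrow> \<rho> [] = q0 \<and>
     (\<forall>u. (\<rho> u, t u, \<rho> (u @ [False]), \<rho> (u @ [True])) \<in> \<Delta>)"

definition along :: "(bool list \<Rightarrow> 'b) \<Rightarrow> (nat \<Rightarrow> bool) \<Rightarrow> nat \<Rightarrow> 'b" where
  "along t \<pi> n = t (map \<pi> [0..<n])"

definition coin :: "(nat \<Rightarrow> bool) measure" where
  "coin = (\<Pi>\<^sub>M i\<in>(UNIV::nat set). measure_pmf (bernoulli_pmf (1/2)))"

definition qual_accepting :: "('q \<Rightarrow> nat) \<Rightarrow> (bool list \<Rightarrow> 'q) \<Rightarrow> bool" where
  "qual_accepting \<alpha> \<rho> \<longleftrightarrow> measure coin {\<pi> \<in> space coin. parity_acc \<alpha> (along \<rho> \<pi>)} = 1"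

definition lang_univ_qual ::
  "('q \<times> 'a \<times> 'q \<times> 'q) set \<Rightarrow> 'q \<Rightarrow> ('q \<Rightarrow> nat) \<Rightarrow> (bool list \<Rightarrow> 'a) set" where
  "lang_univ_qual \<Delta> q0 \<alpha> = {t. \<forall>\<rho>. tree_run \<Delta> q0 t \<rho> \<longrightarrow> qual_accepting \<alpha> \<rho>}"

definition derived_trans :: "('q \<Rightarrow> 'a \<Rightarrow> 'q \<Rightarrow> real) \<Rightarrow> ('q \<times> 'a \<times> 'q \<times> 'q) set" where
  "derived_trans \<delta> = {(q, a, q1, q2) | q a q1 q2.
      q1 \<noteq> q2 \<and> \<delta> q a q1 = 1/2 \<and> \<delta> q a q2 = 1/2}"

end

theory Submission
  imports Defs
begin

text \<open>A run of a binary-branching probabilistic word automaton is a sequence of fair coin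
  flips, each choosing one of the two successors of the current state. On the tree labelled
  \<open>w(|u|)\<close>, every run of the tree automaton is such a choice with the branch direction as
  the coin, so \<open>\<mu>\<^sub>w\<close>-almost-sure acceptance of \<open>w\<close> makes every run qualitatively accepting.
  Conversely, let every run on a tree \<open>t\<close> be qualitatively accepting. Orient the successor
  pair at every node by an independent coin; for each orientation almost every branch accepts,
  so by Fubini there is a branch \<open>\<pi>\<close> along which almost every orientation accepts. Along
  \<open>\<pi>\<close> the orientations are fair coins driving the word automaton on \<open>t(\<pi>)\<close>, hence
  \<open>t(\<pi>)\<close> is accepted almost surely.\<close>

section \<open>Fair coins indexed by an arbitrary type\<close>

definition coin_flips :: "('i \<Rightarrow> bool) measure" where
  "coin_flips = (\<Pi>\<^sub>M i\<in>(UNIV::'i set). measure_pmf (bernoulli_pmf (1/2)))"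

lemma coin_eq_coin_flips: "coin = coin_flips"
  by (simp add: coin_def coin_flips_def)

lemma space_coin_flips [simp]: "space coin_flips = UNIV"
  by (auto simp: coin_flips_def space_PiM)

lemma prob_space_coin_flips: "prob_space coin_flips"
  unfolding coin_flips_def by (intro prob_space_PiM) (simp add: prob_space_measure_pmf)

lemma cylinder_eq_prod_emb:
  "{f. \<forall>j\<in>J. f j = c j} =
     prod_emb UNIV (\<lambda>_. measure_pmf (bernoulli_pmf (1/2))) J (\<Pi>\<^sub>E j\<in>J. {c j})"
  by (auto simp: prod_emb_iff restrict_PiE_iff)

lemma cylinder_in_coin_flips: "finite J \<Longrightarrow> {f. \<forall>j\<in>J. f j = c j} \<in> sets coin_flips"
  unfolding cylinder_eq_prod_emb coin_flips_def by (intro sets_PiM_I) auto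

lemma measure_cylinder:
  assumes "finite J"
  shows "measure coin_flips {f. \<forall>j\<in>J. f j = c j} = (1/2) ^ card J"
proof -
  have "emeasure coin_flips {f. \<forall>j\<in>J. f j = c j} =
      (\<Prod>j\<in>J. emeasure (measure_pmf (bernoulli_pmf (1/2))) {c j})"
    unfolding cylinder_eq_prod_emb coin_flips_def
    by (rule emeasure_PiM_emb) (use assms in \<open>auto simp: prob_space_measure_pmf\<close>)
  also have "\<dots> = (\<Prod>j\<in>J. ennreal (1/2))" by (simp add: emeasure_pmf_single)
  also have "\<dots> = ennreal ((1/2) ^ card J)" by (simp only: prod_constant ennreal_power)
  finally show ?thesis by (simp add: measure_def)
qed

lemma measurable_finite_dependence:
  assumes J: "finite J" and h: "\<And>f g. (\<forall>j\<in>J. f j = g j) \<Longrightarrow> h f = h g"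
  shows "h \<in> coin_flips \<rightarrow>\<^sub>M count_space UNIV"
proof (rule measurableI)
  fix A
  define C where "C = (\<lambda>S x. x \<in> S) ` Pow J"
  have "finite C" unfolding C_def using J by simp
  have "h -` A \<inter> space coin_flips = (\<Union>c\<in>{c\<in>C. h c \<in> A}. {f. \<forall>j\<in>J. f j = c j})"
  proof (intro equalityI subsetI)
    fix f assume f: "f \<in> h -` A \<inter> space coin_flips"
    define c where "c = (\<lambda>x. x \<in> {j\<in>J. f j})"
    have "c \<in> C" unfolding C_def c_def by (rule imageI) simp
    moreover have "h c = h f" by (rule h) (simp add: c_def)
    moreover have "f \<in> {f. \<forall>j\<in>J. f j = c j}" by (simp add: c_def)
    ultimately show "f \<in> (\<Union>c\<in>{c\<in>C. h c \<in> A}. {f. \<forall>j\<in>J. f j = c j})"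
      using f by auto
  next
    fix f assume "f \<in> (\<Union>c\<in>{c\<in>C. h c \<in> A}. {f. \<forall>j\<in>J. f j = c j})"
    then obtain c where "h c \<in> A" "\<forall>j\<in>J. f j = c j" by auto
    then show "f \<in> h -` A \<inter> space coin_flips" using h[of f c] by auto
  qed
  then show "h -` A \<inter> space coin_flips \<in> sets coin_flips"
    using \<open>finite C\<close> J by (auto intro!: cylinder_in_coin_flips)
qed auto

lemma measurable_along: "along \<rho> \<in> coin_flips \<rightarrow>\<^sub>M run_space"
  unfolding run_space_def along_def
proof (rule measurable_PiM_single')
  show "(\<lambda>\<pi>. \<rho> (map \<pi> [0..<i])) \<in> coin_flips \<rightarrow>\<^sub>M count_space UNIV" for i
    by (rule measurable_finite_dependence[of "{..<i}"])
      (auto intro!: arg_cong[where f = \<rho>] simp: map_eq_conv)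
qed simp

lemma (in pair_prob_space) ex_AE_of_AE_all:
  assumes P: "{z \<in> space (M1 \<Otimes>\<^sub>M M2). P (fst z) (snd z)} \<in> sets (M1 \<Otimes>\<^sub>M M2)"
    and ae: "\<And>y. y \<in> space M2 \<Longrightarrow> AE x in M1. P x y"
  shows "\<exists>x. AE y in M2. P x y"
proof -
  have "AE y in M2. AE x in M1. P x y" by (intro AE_I2 ae)
  then have "AE x in M1. AE y in M2. P x y" by (subst AE_commute[OF P])
  then show ?thesis by (metis M1.AE_False eventually_mono)
qed

section \<open>Runs of the word automaton\<close>

lemma space_run_space [simp]: "space run_space = UNIV"
  by (auto simp: run_space_def space_PiM)

lemma cone_in_run_space: "{r. \<forall>i\<le>n. r i = x i} \<in> sets run_space"
proof -
  have "{r. \<forall>i\<le>n. r i = x i} = prod_emb UNIV (\<lambda>_. count_space UNIV) {..n} (\<Pi>\<^sub>E i\<in>{..n}. {x i})"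
    by (auto simp: prod_emb_iff restrict_PiE_iff)
  then show ?thesis unfolding run_space_def by (simp add: sets_PiM_I)
qed

lemma pred_parity_acc: "Measurable.pred run_space (parity_acc (\<alpha> :: 'q::finite \<Rightarrow> nat))"
proof -
  have Collect_even: "even (Min (\<alpha> ` Collect P)) \<longleftrightarrow>
      (\<exists>S\<in>{S. even (Min (\<alpha> ` S))}. \<forall>q. q \<in> S \<longleftrightarrow> P q)" for P
  proof
    assume "\<exists>S\<in>{S. even (Min (\<alpha> ` S))}. \<forall>q. q \<in> S \<longleftrightarrow> P q"
    then obtain S where "even (Min (\<alpha> ` S))" "\<forall>q. q \<in> S \<longleftrightarrow> P q" by blast
    moreover from this have "S = Collect P" by auto
    ultimately show "even (Min (\<alpha> ` Collect P))" by simp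
  qed auto
  show ?thesis
    unfolding parity_acc_def INFM_nat setcompr_eq_image Collect_even run_space_def by measurable
qed

lemma qual_accepting_iff_AE:
  fixes \<alpha> :: "'q::finite \<Rightarrow> nat"
  shows "qual_accepting \<alpha> \<rho> \<longleftrightarrow> (AE \<pi> in coin_flips. parity_acc \<alpha> (along \<rho> \<pi>))"
proof -
  interpret prob_space "coin_flips :: (nat \<Rightarrow> bool) measure" by (rule prob_space_coin_flips)
  have "{\<pi> \<in> space coin_flips. parity_acc \<alpha> (along \<rho> \<pi>)} \<in> sets coin_flips"
    using measurable_compose[OF measurable_along pred_parity_acc] unfolding pred_def .
  then show ?thesis
    unfolding qual_accepting_def coin_eq_coin_flips by (rule prob_Collect_eq_1)
qed

text \<open>A box constraining finitely many coordinates is a finite disjoint union of cones.\<close>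
lemma run_space_measure_eqI:
  fixes M N :: "(nat \<Rightarrow> 'q::finite) measure"
  assumes "finite_measure M" "finite_measure N"
    and sM: "sets M = sets run_space" and sN: "sets N = sets run_space"
    and cones: "\<And>n x. measure M {r. \<forall>i\<le>n. r i = x i} = measure N {r. \<forall>i\<le>n. r i = x i}"
  shows "M = N"
proof (rule measure_eqI_PiM_infinite[of M UNIV "\<lambda>_. count_space UNIV" N])
  interpret M: finite_measure M by fact
  interpret N: finite_measure N by fact
  show "sets M = sets (\<Pi>\<^sub>M i\<in>UNIV. count_space UNIV)" "sets N = sets (\<Pi>\<^sub>M i\<in>UNIV. count_space UNIV)"
    using sM sN by (simp_all add: run_space_def)
  show "finite_measure M" by fact
  fix A :: "nat \<Rightarrow> 'q set" and J :: "nat set"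
  assume J: "finite J"
  define n where "n = Max (insert 0 J)"
  have jn: "j \<in> J \<Longrightarrow> j \<le> n" for j unfolding n_def using J by simp
  define Y where "Y = {x \<in> {..n} \<rightarrow>\<^sub>E UNIV. \<forall>j\<in>J. x j \<in> A j}"
  define C where "C x = {r. \<forall>i\<le>n. r i = x i}" for x :: "nat \<Rightarrow> 'q"
  have "finite Y" using finite_PiE[of "{..n}" "\<lambda>_. UNIV :: 'q set"] unfolding Y_def by simp
  have box: "prod_emb UNIV (\<lambda>_. count_space UNIV) J (Pi\<^sub>E J A) = (\<Union>x\<in>Y. C x)"
  proof (intro equalityI subsetI)
    fix r assume "r \<in> prod_emb UNIV (\<lambda>_. count_space UNIV) J (Pi\<^sub>E J A)"
    then have "\<forall>j\<in>J. r j \<in> A j" by (simp add: prod_emb_iff Pi_iff)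
    then have "restrict r {..n} \<in> Y" unfolding Y_def using jn by simp
    moreover have "r \<in> C (restrict r {..n})" unfolding C_def by simp
    ultimately show "r \<in> (\<Union>x\<in>Y. C x)" by blast
  next
    fix r assume "r \<in> (\<Union>x\<in>Y. C x)"
    then obtain x where "\<forall>j\<in>J. x j \<in> A j" "\<forall>i\<le>n. r i = x i" by (auto simp: Y_def C_def)
    then have "\<forall>j\<in>J. r j \<in> A j" using jn by simp
    then show "r \<in> prod_emb UNIV (\<lambda>_. count_space UNIV) J (Pi\<^sub>E J A)"
      by (simp add: prod_emb_iff)
  qed
  have disj: "disjoint_family_on C Y"
    unfolding disjoint_family_on_def
  proof (intro ballI impI)
    fix x y assume "x \<in> Y" "y \<in> Y" "x \<noteq> y"
    then obtain i where "i \<le> n" "x i \<noteq> y i"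
      using PiE_ext[of x "{..n}" "\<lambda>_. UNIV" y] unfolding Y_def by auto
    then show "C x \<inter> C y = {}" by (auto simp: C_def)
  qed
  have CY: "C ` Y \<subseteq> sets run_space" unfolding C_def using cone_in_run_space by auto
  have "measure M (\<Union>x\<in>Y. C x) = (\<Sum>x\<in>Y. measure M (C x))"
    by (rule measure_finite_Union[OF \<open>finite Y\<close>]) (use CY sM disj in auto)
  also have "\<dots> = (\<Sum>x\<in>Y. measure N (C x))" unfolding C_def using cones by simp
  also have "\<dots> = measure N (\<Union>x\<in>Y. C x)"
    by (rule measure_finite_Union[OF \<open>finite Y\<close>, symmetric]) (use CY sN disj in auto)
  finally show "emeasure M (prod_emb UNIV (\<lambda>_. count_space UNIV) J (Pi\<^sub>E J A)) =
      emeasure N (prod_emb UNIV (\<lambda>_. count_space UNIV) J (Pi\<^sub>E J A))"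
    unfolding box by (simp add: M.emeasure_eq_measure N.emeasure_eq_measure)
qed

lemma induced_run_measure_unique:
  fixes M N :: "(nat \<Rightarrow> 'q::finite) measure"
  assumes M: "induced_run_measure \<delta> q0 w M" and N: "induced_run_measure \<delta> q0 w N"
  shows "M = N"
proof (rule run_space_measure_eqI)
  show "finite_measure M" "finite_measure N"
    using M N unfolding induced_run_measure_def prob_space_def by blast+
  show sets: "sets M = sets run_space" "sets N = sets run_space"
    using M N unfolding induced_run_measure_def by blast+
  fix n x
  have "space M = UNIV" "space N = UNIV"
    using sets_eq_imp_space_eq[OF sets(1)] sets_eq_imp_space_eq[OF sets(2)] by simp_all
  moreover have "measure M {r \<in> space M. \<forall>i\<le>n. r i = x i} = measure N {r \<in> space N. \<forall>i\<le>n. r i = x i}"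
    using M N unfolding induced_run_measure_def by simp
  ultimately show "measure M {r. \<forall>i\<le>n. r i = x i} = measure N {r. \<forall>i\<le>n. r i = x i}"
    by simp
qed

lemma lang_as_iff_AE_induced:
  assumes N: "induced_run_measure \<delta> q0 w N"
  shows "w \<in> lang_as \<delta> q0 \<alpha> \<longleftrightarrow> (AE r in N. parity_acc \<alpha> r)"
proof -
  interpret prob_space N using N unfolding induced_run_measure_def by blast
  have "sets N = sets run_space" using N unfolding induced_run_measure_def by blast
  then have "{r \<in> space N. parity_acc \<alpha> r} \<in> sets N"
    using pred_parity_acc[of \<alpha>] sets_eq_imp_space_eq[of N run_space] unfolding pred_def by simp
  then have "measure N {r \<in> space N. parity_acc \<alpha> r} = 1 \<longleftrightarrow> (AE r in N. parity_acc \<alpha> r)"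
    by (rule prob_Collect_eq_1)
  moreover have "w \<in> lang_as \<delta> q0 \<alpha> \<longleftrightarrow> measure N {r \<in> space N. parity_acc \<alpha> r} = 1"
    using induced_run_measure_unique[OF N] N unfolding lang_as_def by blast
  ultimately show ?thesis by simp
qed

section \<open>The two successors of a binary-branching automaton\<close>

lemma half_successors:
  assumes "prob_word_aut \<delta>" and "binary_branching \<delta>"
  shows "\<exists>p1 p2. p1 \<noteq> p2 \<and> {p. \<delta> q a p = 1/2} = {p1, p2}"
proof -
  let ?P = "{p. \<delta> q a p = 1/2}"
  have \<delta>: "\<delta> q a p = (if p \<in> ?P then 1/2 else 0)" for p
    using assms(2) unfolding binary_branching_def by auto
  have "1 = (\<Sum>p\<in>UNIV. \<delta> q a p)" using assms(1) unfolding prob_word_aut_def by simp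
  also have "\<dots> = (\<Sum>p\<in>UNIV. if p \<in> ?P then 1/2 else 0)" by (subst \<delta>) simp
  also have "\<dots> = (\<Sum>p\<in>?P. 1/2)" by (subst sum.inter_filter[symmetric]) auto
  also have "\<dots> = real (card ?P) / 2" by simp
  finally have "card ?P = 2" by linarith
  then show ?thesis by (auto simp: card_2_iff)
qed

lemma derived_trans_covers_half_successors:
  assumes "prob_word_aut \<delta>" "binary_branching \<delta>"
    and "(q, a, p0, p1) \<in> derived_trans \<delta>" "\<delta> q a p = 1/2"
  shows "p = p0 \<or> p = p1"
proof -
  obtain c1 c2 where "{p. \<delta> q a p = 1/2} = {c1, c2}"
    using half_successors[OF assms(1,2)] by blast
  moreover have "p0 \<noteq> p1" "\<delta> q a p0 = 1/2" "\<delta> q a p1 = 1/2"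
    using assms(3) unfolding derived_trans_def by auto
  ultimately have "{p0, p1, p} \<subseteq> {c1, c2}" "p0 \<noteq> p1" using assms(4) by blast+
  then show ?thesis by auto
qed

definition oriented_succ :: "('q \<Rightarrow> 'a \<Rightarrow> 'q \<Rightarrow> real) \<Rightarrow> 'q \<Rightarrow> 'a \<Rightarrow> bool \<Rightarrow> 'q" where
  "oriented_succ \<delta> q a b =
     (let (p, p') = SOME (p, p'). (q, a, p, p') \<in> derived_trans \<delta> in if b then p' else p)"

lemma oriented_succ_in_derived_trans:
  assumes "prob_word_aut \<delta>" and "binary_branching \<delta>"
  shows "(q, a, oriented_succ \<delta> q a b, oriented_succ \<delta> q a (\<not> b)) \<in> derived_trans \<delta>"
proof -
  have "\<exists>pp. (q, a, fst pp, snd pp) \<in> derived_trans \<delta>"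
    using half_successors[OF assms, of q a] by (auto simp: derived_trans_def)
  then have "(q, a, fst pp, snd pp) \<in> derived_trans \<delta>"
    if "pp = (SOME (p, p'). (q, a, p, p') \<in> derived_trans \<delta>)" for pp
    unfolding that by (metis (mono_tags, lifting) case_prod_beta someI)
  then show ?thesis
    by (cases b) (auto simp: oriented_succ_def derived_trans_def split: prod.splits)
qed

section \<open>Runs driven by coin flips\<close>

text \<open>\<open>s i f\<close> is the state reached after \<open>i\<close> steps on \<open>w\<close> when coin \<open>f (sel i)\<close> picks the
  successor at step \<open>i\<close>.\<close>
locale coin_driven_run =
  fixes \<delta> :: "'q::finite \<Rightarrow> 'a \<Rightarrow> 'q \<Rightarrow> real" and q0 :: 'q and w :: "nat \<Rightarrow> 'a"
    and sel :: "nat \<Rightarrow> 'i" and s :: "nat \<Rightarrow> ('i \<Rightarrow> bool) \<Rightarrow> 'q"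
  assumes prob_word_aut: "prob_word_aut \<delta>" and binary_branching: "binary_branching \<delta>"
    and inj_sel: "inj sel"
    and s_cong: "\<And>i f g. (\<And>j. j < i \<Longrightarrow> f (sel j) = g (sel j)) \<Longrightarrow> s i f = s i g"
    and s_0: "\<And>f. s 0 f = q0"
    and s_Suc: "\<And>i f. (s i f, w i, s (Suc i) (f(sel i := False)), s (Suc i) (f(sel i := True)))
                  \<in> derived_trans \<delta>"
begin

lemma measurable_run: "(\<lambda>f i. s i f) \<in> coin_flips \<rightarrow>\<^sub>M run_space"
  unfolding run_space_def
  by (rule measurable_PiM_single')
    (auto intro!: measurable_finite_dependence[of "sel ` {..<i}" for i] s_cong)

lemma s_Suc_upd_inj:
  assumes "s (Suc i) (f(sel i := b)) = s (Suc i) (f(sel i := b'))"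
  shows "b = b'"
  using s_Suc[of i f] assms by (cases b; cases b') (auto simp: derived_trans_def)

lemma s_Suc_half: "\<delta> (s i f) (w i) (s (Suc i) f) = 1/2"
proof -
  have "s (Suc i) f = s (Suc i) (f(sel i := f (sel i)))" by simp
  then show ?thesis using s_Suc[of i f] by (cases "f (sel i)") (auto simp: derived_trans_def)
qed

lemma s_upd_later: "i \<le> n \<Longrightarrow> s i (f(sel n := b)) = s i f"
  using inj_sel by (intro s_cong) (auto dest: injD)

text \<open>The coins can be read back off the states, since the two successors in a derived
  transition are distinct.\<close>
lemma cone_eq_cylinder:
  assumes f: "\<forall>i\<le>n. s i f = x i"
  shows "{g. \<forall>i\<le>n. s i g = x i} = {g. \<forall>j\<in>sel ` {..<n}. g j = f j}"
proof (intro equalityI subsetI CollectI)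
  fix g assume g: "g \<in> {g. \<forall>i\<le>n. s i g = x i}"
  have "j < n \<longrightarrow> g (sel j) = f (sel j)" for j
  proof (induction j rule: less_induct)
    case (less j)
    show ?case
    proof
      assume "j < n"
      have "s (Suc j) g = s (Suc j) (f(sel j := g (sel j)))"
        using less \<open>j < n\<close> inj_sel by (intro s_cong) (auto simp: less_Suc_eq dest: injD)
      then have "s (Suc j) (f(sel j := g (sel j))) = s (Suc j) (f(sel j := f (sel j)))"
        using f g \<open>j < n\<close> by simp
      then show "g (sel j) = f (sel j)" by (rule s_Suc_upd_inj)
    qed
  qed
  then show "\<forall>j\<in>sel ` {..<n}. g j = f j" by auto
next
  fix g assume "g \<in> {g. \<forall>j\<in>sel ` {..<n}. g j = f j}"
  then have "s i g = s i f" if "i \<le> n" for i using that by (intro s_cong) auto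
  then show "\<forall>i\<le>n. s i g = x i" using f by simp
qed

lemma cone_nonempty:
  assumes "x 0 = q0" and "\<forall>i<n. \<delta> (x i) (w i) (x (Suc i)) = 1/2"
  shows "\<exists>f. \<forall>i\<le>n. s i f = x i"
  using assms(2)
proof (induction n)
  case 0
  show ?case using assms(1) s_0 by simp
next
  case (Suc n)
  then obtain f where f: "\<forall>i\<le>n. s i f = x i" by auto
  have "x (Suc n) = s (Suc n) (f(sel n := False)) \<or> x (Suc n) = s (Suc n) (f(sel n := True))"
    using derived_trans_covers_half_successors[OF prob_word_aut binary_branching s_Suc[of n f]]
      f Suc.prems by simp
  then obtain b where "s (Suc n) (f(sel n := b)) = x (Suc n)" by metis
  then have "\<forall>i\<le>Suc n. s i (f(sel n := b)) = x i"
    using f s_upd_later by (auto simp: le_Suc_eq)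
  then show ?case by blast
qed

lemma measure_cone:
  "measure coin_flips {f. \<forall>i\<le>n. s i f = x i} =
     (if x 0 = q0 then \<Prod>i<n. \<delta> (x i) (w i) (x (Suc i)) else 0)"
proof (cases "x 0 = q0 \<and> (\<forall>i<n. \<delta> (x i) (w i) (x (Suc i)) = 1/2)")
  case True
  then obtain f where f: "\<forall>i\<le>n. s i f = x i" using cone_nonempty by blast
  have "card (sel ` {..<n}) = n" using inj_sel by (simp add: card_image inj_on_subset)
  then have "measure coin_flips {f. \<forall>i\<le>n. s i f = x i} = (1/2) ^ n"
    unfolding cone_eq_cylinder[OF f] by (simp only: measure_cylinder finite_imageI finite_lessThan)
  moreover have "(\<Prod>i<n. \<delta> (x i) (w i) (x (Suc i))) = (\<Prod>i<n. 1/2)"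
    using True by (intro prod.cong) auto
  moreover have "x 0 = q0" using True ..
  ultimately show ?thesis by simp
next
  case False
  have "{f. \<forall>i\<le>n. s i f = x i} = {}"
  proof (rule equals0I)
    fix f assume f: "f \<in> {f. \<forall>i\<le>n. s i f = x i}"
    have "x 0 = q0" using f s_0[of f] by auto
    moreover have "\<delta> (x i) (w i) (x (Suc i)) = 1/2" if "i < n" for i
      using f that s_Suc_half[of i f] by auto
    ultimately show False using False by blast
  qed
  then have "measure coin_flips {f. \<forall>i\<le>n. s i f = x i} = 0" by (simp only: measure_empty)
  moreover have "x 0 = q0 \<Longrightarrow> \<exists>i<n. \<delta> (x i) (w i) (x (Suc i)) = 0"
    using False binary_branching unfolding binary_branching_def by blast
  ultimately show ?thesis by (auto simp: prod_zero_iff)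
qed

lemma induced_run_measure_distr:
  "induced_run_measure \<delta> q0 w (distr coin_flips run_space (\<lambda>f i. s i f))"
  unfolding induced_run_measure_def
proof (intro conjI allI)
  show "prob_space (distr coin_flips run_space (\<lambda>f i. s i f))"
    by (rule prob_space.prob_space_distr[OF prob_space_coin_flips measurable_run])
  fix n x
  show "measure (distr coin_flips run_space (\<lambda>f i. s i f))
      {r \<in> space (distr coin_flips run_space (\<lambda>f i. s i f)). \<forall>i\<le>n. r i = x i} =
      (if x 0 = q0 then \<Prod>i<n. \<delta> (x i) (w i) (x (Suc i)) else 0)"
    using measure_distr[OF measurable_run cone_in_run_space[of n x]]
    by (simp add: vimage_def measure_cone)
qed simp

lemma lang_as_iff_AE_coin_flips:
  "w \<in> lang_as \<delta> q0 \<alpha> \<longleftrightarrow> (AE f in coin_flips. parity_acc \<alpha> (\<lambda>i. s i f))"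
  unfolding lang_as_iff_AE_induced[OF induced_run_measure_distr]
  by (rule AE_distr_iff[OF measurable_run]) (use pred_parity_acc[of \<alpha>] in \<open>unfold pred_def\<close>)

end

section \<open>Runs of the tree automaton\<close>

lemma tree_of_word_in_lang_univ_qual:
  assumes pw: "prob_word_aut \<delta>" and bb: "binary_branching \<delta>"
    and w: "w \<in> lang_as \<delta> q0 \<alpha>"
  shows "(\<lambda>u. w (length u)) \<in> lang_univ_qual (derived_trans \<delta>) q0 \<alpha>"
  unfolding lang_univ_qual_def
proof (intro CollectI allI impI)
  fix \<rho> assume \<rho>: "tree_run (derived_trans \<delta>) q0 (\<lambda>u. w (length u)) \<rho>"
  interpret coin_driven_run \<delta> q0 w id "\<lambda>i \<pi>. along \<rho> \<pi> i"
  proof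
    fix i and f g :: "nat \<Rightarrow> bool"
    assume "\<And>j. j < i \<Longrightarrow> f (id j) = g (id j)"
    then show "along \<rho> f i = along \<rho> g i"
      by (auto simp: along_def map_eq_conv intro!: arg_cong[where f = \<rho>])
  next
    fix i and f :: "nat \<Rightarrow> bool"
    have "along \<rho> (f(id i := b)) (Suc i) = \<rho> (map f [0..<i] @ [b])" for b
      by (simp add: along_def)
    then show "(along \<rho> f i, w i, along \<rho> (f(id i := False)) (Suc i),
        along \<rho> (f(id i := True)) (Suc i)) \<in> derived_trans \<delta>"
      using \<rho> unfolding tree_run_def along_def by (metis length_map diff_zero length_upt)
  qed (use pw bb \<rho> in \<open>auto simp: along_def tree_run_def\<close>)
  show "qual_accepting \<alpha> \<rho>"
    using w unfolding lang_as_iff_AE_coin_flips qual_accepting_iff_AE by simp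
qed

text \<open>The run of the tree automaton that orients the successor pair at node \<open>u\<close> by
  \<open>ord u\<close>; it is defined on reversed nodes so that children are obtained by consing.\<close>
fun oriented_run_rev ::
  "('q \<Rightarrow> 'a \<Rightarrow> 'q \<Rightarrow> real) \<Rightarrow> 'q \<Rightarrow> (bool list \<Rightarrow> 'a) \<Rightarrow> (bool list \<Rightarrow> bool) \<Rightarrow> bool list \<Rightarrow> 'q"
where
  "oriented_run_rev \<delta> q0 t ord [] = q0"
| "oriented_run_rev \<delta> q0 t ord (b # v) =
     oriented_succ \<delta> (oriented_run_rev \<delta> q0 t ord v) (t (rev v)) (b \<noteq> ord (rev v))"

definition oriented_run ::
  "('q \<Rightarrow> 'a \<Rightarrow> 'q \<Rightarrow> real) \<Rightarrow> 'q \<Rightarrow> (bool list \<Rightarrow> 'a) \<Rightarrow> (bool list \<Rightarrow> bool) \<Rightarrow> bool list \<Rightarrow> 'q"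
where
  "oriented_run \<delta> q0 t ord u = oriented_run_rev \<delta> q0 t ord (rev u)"

lemma oriented_run_Nil [simp]: "oriented_run \<delta> q0 t ord [] = q0"
  by (simp add: oriented_run_def)

lemma oriented_run_snoc [simp]:
  "oriented_run \<delta> q0 t ord (u @ [b]) =
     oriented_succ \<delta> (oriented_run \<delta> q0 t ord u) (t u) (b \<noteq> ord u)"
  by (simp add: oriented_run_def)

lemma oriented_run_cong:
  "(\<And>k. k < length u \<Longrightarrow> ord (take k u) = ord' (take k u)) \<Longrightarrow>
     oriented_run \<delta> q0 t ord u = oriented_run \<delta> q0 t ord' u"
proof (induction u rule: rev_induct)
  case (snoc b u)
  have "ord (take k u) = ord' (take k u)" if "k < length u" for k
    using snoc.prems[of k] that by simp
  then have "oriented_run \<delta> q0 t ord u = oriented_run \<delta> q0 t ord' u" by (rule snoc.IH)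
  moreover have "ord u = ord' u" using snoc.prems[of "length u"] by simp
  ultimately show ?case by simp
qed simp

lemma tree_run_oriented_run:
  assumes "prob_word_aut \<delta>" and "binary_branching \<delta>"
  shows "tree_run (derived_trans \<delta>) q0 t (oriented_run \<delta> q0 t ord)"
  unfolding tree_run_def using oriented_succ_in_derived_trans[OF assms] by simp

lemma measurable_oriented_run_orientation:
  "(\<lambda>ord. oriented_run \<delta> q0 t ord u) \<in> coin_flips \<rightarrow>\<^sub>M count_space UNIV"
  by (rule measurable_finite_dependence[of "(\<lambda>k. take k u) ` {..<length u}"])
    (auto intro!: oriented_run_cong)

lemma measurable_oriented_runs_along:
  "(\<lambda>z. along (oriented_run \<delta> q0 t (snd z)) (fst z)) \<in> coin_flips \<Otimes>\<^sub>M coin_flips \<rightarrow>\<^sub>M run_space"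
  unfolding run_space_def along_def
proof (rule measurable_PiM_single')
  fix i
  have "(\<lambda>z. map (fst z) [0..<i]) \<in> coin_flips \<Otimes>\<^sub>M coin_flips \<rightarrow>\<^sub>M count_space UNIV"
    by (intro measurable_compose[OF measurable_fst] measurable_finite_dependence[of "{..<i}"])
      (auto simp: map_eq_conv)
  then show "(\<lambda>z. oriented_run \<delta> q0 t (snd z) (map (fst z) [0..<i]))
      \<in> coin_flips \<Otimes>\<^sub>M coin_flips \<rightarrow>\<^sub>M count_space UNIV"
    by (rule measurable_compose_countable[OF measurable_compose[OF measurable_snd
          measurable_oriented_run_orientation]])
qed simp

lemma lang_as_nonempty_of_lang_univ_qual:
  assumes pw: "prob_word_aut \<delta>" and bb: "binary_branching \<delta>"
    and t: "t \<in> lang_univ_qual (derived_trans \<delta>) q0 \<alpha>"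
  shows "\<exists>\<pi>. along t \<pi> \<in> lang_as \<delta> q0 \<alpha>"
proof -
  interpret pair_prob_space "coin_flips :: (nat \<Rightarrow> bool) measure"
    "coin_flips :: (bool list \<Rightarrow> bool) measure"
    by (simp add: pair_prob_space_def pair_sigma_finite_def prob_space_coin_flips
        prob_space_imp_sigma_finite)
  have "\<exists>\<pi>. AE ord in coin_flips. parity_acc \<alpha> (along (oriented_run \<delta> q0 t ord) \<pi>)"
  proof (rule ex_AE_of_AE_all)
    show "{z \<in> space (coin_flips \<Otimes>\<^sub>M coin_flips).
        parity_acc \<alpha> (along (oriented_run \<delta> q0 t (snd z)) (fst z))} \<in> sets (coin_flips \<Otimes>\<^sub>M coin_flips)"
      using measurable_compose[OF measurable_oriented_runs_along pred_parity_acc]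
      by (simp add: pred_def)
    fix ord
    have "qual_accepting \<alpha> (oriented_run \<delta> q0 t ord)"
      using t tree_run_oriented_run[OF pw bb] unfolding lang_univ_qual_def by blast
    then show "AE \<pi> in coin_flips. parity_acc \<alpha> (along (oriented_run \<delta> q0 t ord) \<pi>)"
      unfolding qual_accepting_iff_AE .
  qed
  then obtain \<pi> where \<pi>: "AE ord in coin_flips. parity_acc \<alpha> (along (oriented_run \<delta> q0 t ord) \<pi>)"
    by blast
  define sel where "sel i = map \<pi> [0..<i]" for i
  have length_sel: "length (sel i) = i" for i by (simp add: sel_def)
  have take_sel: "k < i \<Longrightarrow> take k (sel i) = sel k" for k i
    by (simp add: sel_def take_map)
  have inj_sel: "inj sel" by (rule injI) (metis length_sel)
  interpret coin_driven_run \<delta> q0 "along t \<pi>" sel "\<lambda>i ord. oriented_run \<delta> q0 t ord (sel i)"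
  proof
    show "oriented_run \<delta> q0 t f (sel i) = oriented_run \<delta> q0 t g (sel i)"
      if "\<And>j. j < i \<Longrightarrow> f (sel j) = g (sel j)" for i f g
      using that take_sel by (intro oriented_run_cong) (simp add: sel_def)
    have step: "oriented_run \<delta> q0 t (f(sel i := b)) (sel (Suc i)) =
        oriented_succ \<delta> (oriented_run \<delta> q0 t f (sel i)) (t (sel i)) (\<pi> i \<noteq> b)" for i f b
    proof -
      have "oriented_run \<delta> q0 t (f(sel i := b)) (sel i) = oriented_run \<delta> q0 t f (sel i)"
        using take_sel length_sel by (intro oriented_run_cong) (metis fun_upd_other less_irrefl)
      then show ?thesis by (simp add: sel_def)
    qed
    then show "(oriented_run \<delta> q0 t f (sel i), along t \<pi> i,
        oriented_run \<delta> q0 t (f(sel i := False)) (sel (Suc i)),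
        oriented_run \<delta> q0 t (f(sel i := True)) (sel (Suc i))) \<in> derived_trans \<delta>" for i f
      unfolding step using oriented_succ_in_derived_trans[OF pw bb] by (simp add: along_def sel_def)
  qed (use pw bb inj_sel in \<open>auto simp: sel_def\<close>)
  have "along t \<pi> \<in> lang_as \<delta> q0 \<alpha>"
    unfolding lang_as_iff_AE_coin_flips using \<pi> by (simp add: along_def[abs_def] sel_def)
  then show ?thesis by blast
qed

theorem mainTheorem12:
  fixes \<delta> :: "'q::finite \<Rightarrow> 'a::finite \<Rightarrow> 'q \<Rightarrow> real"
    and q0 :: 'q and \<alpha> :: "'q \<Rightarrow> nat"
  assumes "prob_word_aut \<delta>" and "binary_branching \<delta>"
  shows "lang_as \<delta> q0 \<alpha> = {} \<longleftrightarrow> lang_univ_qual (derived_trans \<delta>) q0 \<alpha> = {}"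
  using tree_of_word_in_lang_univ_qual[OF assms] lang_as_nonempty_of_lang_univ_qual[OF assms]
  by blast

end
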